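(* For every integer $n\ge4$: $\gamma_{(2,1,1)}(P_n)=\frac{2n}{3}+1$ if $n\equiv0\pmod3$ and $\gamma_{(2,1,1)}(P_n)=2\lceil n/3\rceil$ otherwise; and $\gamma_{(2,1,1)}(C_n)=\lceil 2n/3\rceil$.
   Context: $P_n$ and $C_n$ denote the path and the cycle on $n$ vertices. For a graph $G$, a function $f:V(G)\to\{0,1,2\}$ is a $(2,1,1)$-dominating function if $\sum_{u\in N(v)}f(u)\ge2$ for every vertex $v$ with $f(v)=0$, and $\sum_{u\in N(v)}f(u)\ge1$ for every vertex $v$ with $f(v)\in\{1,2\}$, where $N(v)$ is the open neighbourhood. $\gamma_{(2,1,1)}(G)$ is the minimum of $\sum_{v}f(v)$ over all $(2,1,1)$-dominating functions $f$. *)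

theory Defs
  imports Complex_Main
begin

text \<open>A finite simple graph is given by a vertex set V and a symmetric irreflexive
adjacency relation E. Open neighbourhood of v: the vertices of V adjacent to v.\<close>

definition nbhd :: "'a set \<Rightarrow> ('a \<Rightarrow> 'a \<Rightarrow> bool) \<Rightarrow> 'a \<Rightarrow> 'a set" where
  "nbhd V E v = {u \<in> V. E v u}"

definition is_211_dom :: "'a set \<Rightarrow> ('a \<Rightarrow> 'a \<Rightarrow> bool) \<Rightarrow> ('a \<Rightarrow> nat) \<Rightarrow> bool" where
  "is_211_dom V E f \<longleftrightarrow>
     (\<forall>v. v \<notin> V \<longrightarrow> f v = 0) \<and>
     (\<forall>v\<in>V. f v \<le> 2) \<and>
     (\<forall>v\<in>V. f v = 0 \<longrightarrow> (\<Sum>u\<in>nbhd V E v. f u) \<ge> 2) \<and>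
     (\<forall>v\<in>V. f v \<in> {1,2} \<longrightarrow> (\<Sum>u\<in>nbhd V E v. f u) \<ge> 1)"

definition gamma_211 :: "'a set \<Rightarrow> ('a \<Rightarrow> 'a \<Rightarrow> bool) \<Rightarrow> nat" where
  "gamma_211 V E = (LEAST w. \<exists>f. is_211_dom V E f \<and> w = (\<Sum>v\<in>V. f v))"

definition path_adj :: "nat \<Rightarrow> nat \<Rightarrow> bool" where
  "path_adj i j \<longleftrightarrow> i = j + 1 \<or> j = i + 1"

definition cycle_adj :: "nat \<Rightarrow> nat \<Rightarrow> nat \<Rightarrow> bool" where
  "cycle_adj n i j \<longleftrightarrow> i \<noteq> j \<and> (j = (i + 1) mod n \<or> i = (j + 1) mod n)"

definition P :: "nat \<Rightarrow> nat set \<times> (nat \<Rightarrow> nat \<Rightarrow> bool)" where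
  "P n = ({0..<n}, path_adj)"

definition C :: "nat \<Rightarrow> nat set \<times> (nat \<Rightarrow> nat \<Rightarrow> bool)" where
  "C n = ({0..<n}, cycle_adj n)"

definition gamma_211_graph :: "'a set \<times> ('a \<Rightarrow> 'a \<Rightarrow> bool) \<Rightarrow> nat" where
  "gamma_211_graph G = gamma_211 (fst G) (snd G)"

end

theory Submission
  imports Defs
begin

(* Lower bound by double counting: for a (2,1,1)-dominating f, every closed-neighbourhood
   sum f v + (sum of f over N(v)) is at least 2, and at least 3 when f v = 2. Summing over all
   vertices counts each f u exactly 1 + deg u times. On C_n this gives 3 w(f) >= 2n. On P_n the
   two leaves are counted only twice, but a leaf of value 0 forces value 2 on its neighbour,
   and this recovers 3 w(f) >= 2n + 2. Both bounds are attained by the periodic pattern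
   1,1,0,1,1,0,... (on P_n with the last two vertices set to 1). *)

lemma finite_nbhd: "finite V \<Longrightarrow> finite (nbhd V E v)"
  by (simp add: nbhd_def)

lemma is_211_domI:
  assumes "finite V"
    and outside: "\<And>v. v \<notin> V \<Longrightarrow> f v = 0"
    and bounded: "\<And>v. v \<in> V \<Longrightarrow> f v \<le> 2"
    and zero: "\<And>v. v \<in> V \<Longrightarrow> f v = 0 \<Longrightarrow>
                 \<exists>a\<in>nbhd V E v. \<exists>b\<in>nbhd V E v. a \<noteq> b \<and> 0 < f a \<and> 0 < f b"
    and pos: "\<And>v. v \<in> V \<Longrightarrow> 0 < f v \<Longrightarrow> \<exists>a\<in>nbhd V E v. 0 < f a"
  shows "is_211_dom V E f"
proof -
  have fin: "finite (nbhd V E v)" for v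
    using \<open>finite V\<close> by (rule finite_nbhd)
  have "2 \<le> (\<Sum>u\<in>nbhd V E v. f u)" if v: "v \<in> V" "f v = 0" for v
  proof -
    obtain a b where ab: "a \<in> nbhd V E v" "b \<in> nbhd V E v" "a \<noteq> b" "0 < f a" "0 < f b"
      using zero[OF v] by blast
    then have "2 \<le> (\<Sum>u\<in>{a, b}. f u)"
      by simp
    also have "\<dots> \<le> (\<Sum>u\<in>nbhd V E v. f u)"
      using ab fin by (intro sum_mono2) auto
    finally show ?thesis .
  qed
  moreover have "1 \<le> (\<Sum>u\<in>nbhd V E v. f u)" if v: "v \<in> V" "0 < f v" for v
  proof -
    obtain a where "a \<in> nbhd V E v" "0 < f a"
      using pos[OF v] by blast
    then show ?thesis
      using member_le_sum[of a "nbhd V E v" f] fin by simp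
  qed
  ultimately show ?thesis
    using outside bounded unfolding is_211_dom_def by auto
qed

lemma is_211_dom_closed_nbhd_sum:
  assumes "is_211_dom V E f" "v \<in> V"
  shows "2 + of_bool (f v = 2) \<le> f v + (\<Sum>u\<in>nbhd V E v. f u)"
proof -
  have "f v \<le> 2"
    using assms unfolding is_211_dom_def by blast
  then consider "f v = 0" | "f v = 1" | "f v = 2"
    by linarith
  then show ?thesis
    using assms unfolding is_211_dom_def by cases auto
qed

lemma is_211_dom_leaf:
  assumes "is_211_dom V E f" "v \<in> V" "nbhd V E v = {u}" "f v = 0"
  shows "f u = 2"
proof -
  have "u \<in> V"
    using assms(3) unfolding nbhd_def by blast
  moreover have "2 \<le> f u"
    using assms unfolding is_211_dom_def by fastforce
  ultimately show ?thesis
    using assms(1) unfolding is_211_dom_def by (simp add: le_antisym)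
qed

lemma sum_nbhd_eq_sum_degree:
  assumes "finite V" "symp E"
  shows "(\<Sum>v\<in>V. \<Sum>u\<in>nbhd V E v. g u) = (\<Sum>u\<in>V. card (nbhd V E u) * g u)"
proof -
  have "(\<Sum>v\<in>V. \<Sum>u\<in>nbhd V E v. g u) = (\<Sum>u\<in>V. \<Sum>v\<in>{v. v \<in> V \<and> E v u}. g u)"
    unfolding nbhd_def using sum.swap_restrict[OF assms(1) assms(1), of "\<lambda>v u. g u" E] by simp
  also have "\<dots> = (\<Sum>u\<in>V. card (nbhd V E u) * g u)"
  proof (intro sum.cong refl)
    fix u
    have "{v. v \<in> V \<and> E v u} = nbhd V E u"
      using \<open>symp E\<close> by (auto simp: nbhd_def dest: sympD)
    then show "(\<Sum>v\<in>{v. v \<in> V \<and> E v u}. g u) = card (nbhd V E u) * g u"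
      by simp
  qed
  finally show ?thesis .
qed

lemma is_211_dom_degree_weighted_sum_ge:
  assumes "finite V" "symp E" "is_211_dom V E f"
  shows "2 * card V + card {v \<in> V. f v = 2}
           \<le> (\<Sum>v\<in>V. (1 + card (nbhd V E v)) * f v)"
proof -
  have "2 * card V + card {v \<in> V. f v = 2} = (\<Sum>v\<in>V. 2 + of_bool (f v = 2))"
    using \<open>finite V\<close> by (simp only: sum.distrib sum_of_bool_eq) (simp add: Int_def)
  also have "\<dots> \<le> (\<Sum>v\<in>V. f v + (\<Sum>u\<in>nbhd V E v. f u))"
    using is_211_dom_closed_nbhd_sum[OF assms(3)] by (rule sum_mono)
  also have "\<dots> = (\<Sum>v\<in>V. (1 + card (nbhd V E v)) * f v)"
    using sum_nbhd_eq_sum_degree[OF assms(1,2)] by (simp add: sum.distrib algebra_simps)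
  finally show ?thesis .
qed

lemma gamma_211_eqI:
  assumes "is_211_dom V E f" "(\<Sum>v\<in>V. f v) = k"
    and "\<And>g. is_211_dom V E g \<Longrightarrow> k \<le> (\<Sum>v\<in>V. g v)"
  shows "gamma_211 V E = k"
  unfolding gamma_211_def using assms by (intro Least_equality) auto

lemma sum_of_bool_mod3_ne2:
  "(\<Sum>i\<in>{0..<m}. of_bool (i mod 3 \<noteq> 2) :: nat) = (2 * m + 2) div 3"
proof (induction m)
  case (Suc m)
  then show ?case
    by (simp add: of_bool_def) presburger
qed simp

lemma symp_path_adj: "symp path_adj"
  by (auto simp: symp_def path_adj_def)

lemma path_nbhd: "nbhd {0..<n} path_adj v = {u. u < n \<and> (v = u + 1 \<or> u = v + 1)}"
  by (auto simp: nbhd_def path_adj_def)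

lemma card_path_nbhd:
  assumes "v < n" "2 \<le> n"
  shows "card (nbhd {0..<n} path_adj v) = (if v = 0 \<or> v = n - 1 then 1 else 2)"
proof -
  consider "v = 0" | "v = n - 1" | "0 < v" "v < n - 1"
    using assms by linarith
  then show ?thesis
  proof cases
    case 1
    then have "nbhd {0..<n} path_adj v = {1}"
      using assms by (auto simp: path_nbhd)
    then show ?thesis using 1 by simp
  next
    case 2
    then have "nbhd {0..<n} path_adj v = {n - 2}"
      using assms by (auto simp: path_nbhd)
    then show ?thesis using 2 by simp
  next
    case 3
    then have "nbhd {0..<n} path_adj v = {v - 1, v + 1}"
      using assms by (auto simp: path_nbhd)
    then show ?thesis using 3 by simp
  qed
qed

lemma path_degree_weighted_sum:
  assumes "2 \<le> n"
  shows "(\<Sum>v\<in>{0..<n}. (1 + card (nbhd {0..<n} path_adj v)) * g v) + g 0 + g (n - 1)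
           = 3 * (\<Sum>v\<in>{0..<n}. g v)"
proof -
  have "(\<Sum>v\<in>{0..<n}. (1 + card (nbhd {0..<n} path_adj v)) * g v
                        + of_bool (v \<in> {0, n - 1}) * g v)
          = (\<Sum>v\<in>{0..<n}. 3 * g v)"
    using assms by (intro sum.cong) (auto simp: card_path_nbhd)
  moreover have "{0..<n} \<inter> {v. v \<in> {0, n - 1}} = {0, n - 1}"
    using assms by auto
  then have "(\<Sum>v\<in>{0..<n}. of_bool (v \<in> {0, n - 1}) * g v) = (\<Sum>v\<in>{0, n - 1}. g v)"
    by (simp only: sum_of_bool_mult_eq[OF finite_atLeastLessThan])
  moreover have "(\<Sum>v\<in>{0, n - 1}. g v) = g 0 + g (n - 1)"
    using assms by simp
  ultimately show ?thesis
    by (simp add: sum.distrib sum_distrib_left)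
qed

lemma path_211_dom_weight_ge:
  assumes "is_211_dom {0..<n} path_adj f" "4 \<le> n"
  shows "2 * n + 2 \<le> 3 * (\<Sum>v\<in>{0..<n}. f v)"
proof -
  let ?T = "{v \<in> {0..<n}. f v = 2}"
    and ?S = "(if f 0 = 0 then {1} else {}) \<union> (if f (n - 1) = 0 then {n - 2} else {})"
  have "2 * n + card ?T + f 0 + f (n - 1) \<le> 3 * (\<Sum>v\<in>{0..<n}. f v)"
    using is_211_dom_degree_weighted_sum_ge[OF _ symp_path_adj assms(1)]
      path_degree_weighted_sum[of n f] assms(2)
    by simp
  moreover have "of_bool (f 0 = 0) + of_bool (f (n - 1) = 0) \<le> card ?T"
  proof -
    have nb: "nbhd {0..<n} path_adj 0 = {1}" "nbhd {0..<n} path_adj (n - 1) = {n - 2}"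
      using assms(2) by (auto simp: path_nbhd)
    then have "f 1 = 2" if "f 0 = 0"
      using is_211_dom_leaf[OF assms(1), of 0 1] that assms(2) by simp
    moreover have "f (n - 2) = 2" if "f (n - 1) = 0"
      using is_211_dom_leaf[OF assms(1), of "n - 1" "n - 2"] nb that assms(2) by simp
    ultimately have "?S \<subseteq> ?T"
      using assms(2) by auto
    then have "card ?S \<le> card ?T"
      by (intro card_mono) auto
    then show ?thesis
      using assms(2) by (auto split: if_splits)
  qed
  ultimately show ?thesis
    by (auto simp: of_bool_def split: if_splits)
qed

definition path_211_fun :: "nat \<Rightarrow> nat \<Rightarrow> nat" where
  "path_211_fun n i = of_bool (i < n \<and> (i mod 3 \<noteq> 2 \<or> n \<le> i + 2))"

lemma sum_path_211_fun:
  assumes "2 \<le> n"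
  shows "(\<Sum>i\<in>{0..<n}. path_211_fun n i) = (2 * n + 4) div 3"
proof -
  obtain m where n: "n = m + 2"
    using assms by (metis add.commute le_iff_add)
  have "(\<Sum>i\<in>{0..<n}. path_211_fun n i) = (\<Sum>i\<in>{0..<m}. of_bool (i mod 3 \<noteq> 2)) + 2"
    by (simp add: n path_211_fun_def)
  also have "\<dots> = (2 * n + 4) div 3"
    unfolding sum_of_bool_mod3_ne2 n by presburger
  finally show ?thesis .
qed

lemma is_211_dom_path_211_fun:
  assumes "4 \<le> n"
  shows "is_211_dom {0..<n} path_adj (path_211_fun n)"
proof (rule is_211_domI)
  let ?f = "path_211_fun n" and ?N = "nbhd {0..<n} path_adj"
  fix v assume v: "v \<in> {0..<n}"
  show "\<exists>a\<in>?N v. \<exists>b\<in>?N v. a \<noteq> b \<and> 0 < ?f a \<and> 0 < ?f b" if "?f v = 0"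
  proof -
    have "v mod 3 = 2" "v + 2 < n"
      using that v by (auto simp: path_211_fun_def)
    then have "v - 1 \<in> ?N v" "v + 1 \<in> ?N v" "0 < ?f (v - 1)" "0 < ?f (v + 1)"
      by (cases v; auto simp: path_nbhd path_211_fun_def mod_Suc split: if_splits)+
    moreover have "v - 1 \<noteq> v + 1"
      by simp
    ultimately show ?thesis
      by blast
  qed
  show "\<exists>a\<in>?N v. 0 < ?f a"
  proof -
    consider "v = 0" | "0 < v" "0 < ?f (v - 1)" | "0 < v" "?f (v - 1) = 0"
      by blast
    then show ?thesis
    proof cases
      case 1
      then have "1 \<in> ?N v" "0 < ?f 1"
        using assms by (auto simp: path_nbhd path_211_fun_def)
      then show ?thesis by blast
    next
      case 2
      then have "v - 1 \<in> ?N v"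
        using v by (auto simp: path_nbhd)
      then show ?thesis using 2 by blast
    next
      case 3
      then have "(v - 1) mod 3 = 2" "v + 1 < n"
        using v by (auto simp: path_211_fun_def)
      then have "v + 1 \<in> ?N v" "0 < ?f (v + 1)"
        using \<open>0 < v\<close> by (cases v; auto simp: path_nbhd path_211_fun_def mod_Suc)+
      then show ?thesis by blast
    qed
  qed
qed (auto simp: path_211_fun_def)

lemma gamma_211_path:
  assumes "4 \<le> n"
  shows "gamma_211 {0..<n} path_adj = (2 * n + 4) div 3"
proof (rule gamma_211_eqI)
  show "is_211_dom {0..<n} path_adj (path_211_fun n)"
    using assms by (rule is_211_dom_path_211_fun)
  show "(\<Sum>v\<in>{0..<n}. path_211_fun n v) = (2 * n + 4) div 3"
    using assms by (simp add: sum_path_211_fun)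
  show "(2 * n + 4) div 3 \<le> (\<Sum>v\<in>{0..<n}. g v)" if "is_211_dom {0..<n} path_adj g" for g
    using path_211_dom_weight_ge[OF that assms] by linarith
qed

lemma symp_cycle_adj: "symp (cycle_adj n)"
  by (auto simp: symp_def cycle_adj_def)

lemma cycle_nbhd:
  assumes "3 \<le> n" "v < n"
  shows "nbhd {0..<n} (cycle_adj n) v
           = {if v + 1 = n then 0 else v + 1, if v = 0 then n - 1 else v - 1}"
proof -
  have succ: "(u + 1) mod n = (if u + 1 = n then 0 else u + 1)" if "u < n" for u
    using that by (simp add: mod_Suc)
  have "cycle_adj n v u \<longleftrightarrow>
          v \<noteq> u \<and> (u = (if v + 1 = n then 0 else v + 1) \<or> v = (if u + 1 = n then 0 else u + 1))"
    if "u < n" for u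
    using that assms(2) unfolding cycle_adj_def by (simp only: succ)
  then show ?thesis
    using assms by (auto simp: nbhd_def split: if_splits)
qed

lemma card_cycle_nbhd:
  assumes "3 \<le> n" "v < n"
  shows "card (nbhd {0..<n} (cycle_adj n) v) = 2"
  using assms by (simp add: cycle_nbhd)

lemma cycle_211_dom_weight_ge:
  assumes "is_211_dom {0..<n} (cycle_adj n) f" "3 \<le> n"
  shows "2 * n \<le> 3 * (\<Sum>v\<in>{0..<n}. f v)"
proof -
  have "2 * card {0..<n} \<le> (\<Sum>v\<in>{0..<n}. (1 + card (nbhd {0..<n} (cycle_adj n) v)) * f v)"
    using is_211_dom_degree_weighted_sum_ge[OF _ symp_cycle_adj assms(1)] by simp
  also have "\<dots> = (\<Sum>v\<in>{0..<n}. 3 * f v)"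
    using assms(2) by (intro sum.cong) (simp_all add: card_cycle_nbhd)
  also have "\<dots> = 3 * (\<Sum>v\<in>{0..<n}. f v)"
    by (simp only: sum_distrib_left)
  finally show ?thesis by simp
qed

definition cycle_211_fun :: "nat \<Rightarrow> nat \<Rightarrow> nat" where
  "cycle_211_fun n i = of_bool (i < n \<and> i mod 3 \<noteq> 2)"

lemma sum_cycle_211_fun: "(\<Sum>i\<in>{0..<n}. cycle_211_fun n i) = (2 * n + 2) div 3"
  unfolding cycle_211_fun_def by (simp add: sum_of_bool_mod3_ne2 flip: Int_def)

lemma is_211_dom_cycle_211_fun:
  assumes "3 \<le> n"
  shows "is_211_dom {0..<n} (cycle_adj n) (cycle_211_fun n)"
proof (rule is_211_domI)
  let ?f = "cycle_211_fun n" and ?N = "nbhd {0..<n} (cycle_adj n)"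
  have succ: "0 < ?f (if v + 1 = n then 0 else v + 1)" if "v mod 3 \<noteq> 1" "v < n" for v
    using that assms by (auto simp: cycle_211_fun_def mod_Suc)
  have pred: "0 < ?f (v - 1)" if "v mod 3 \<noteq> 0" "v < n" for v
    using that by (cases v) (auto simp: cycle_211_fun_def mod_Suc split: if_splits)
  fix v assume v: "v \<in> {0..<n}"
  then have nb: "?N v = {if v + 1 = n then 0 else v + 1, if v = 0 then n - 1 else v - 1}"
    using assms by (simp add: cycle_nbhd)
  show "\<exists>a\<in>?N v. \<exists>b\<in>?N v. a \<noteq> b \<and> 0 < ?f a \<and> 0 < ?f b" if "?f v = 0"
  proof -
    have "v mod 3 = 2"
      using that v by (simp add: cycle_211_fun_def)
    then have "v \<noteq> 0" "v \<noteq> 1"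
      by auto
    then show ?thesis
      using succ[of v] pred[of v] v \<open>v mod 3 = 2\<close> unfolding nb by auto
  qed
  show "\<exists>a\<in>?N v. 0 < ?f a"
    using succ[of v] pred[of v] v unfolding nb by (cases "v mod 3 = 1") auto
qed (auto simp: cycle_211_fun_def)

lemma gamma_211_cycle:
  assumes "3 \<le> n"
  shows "gamma_211 {0..<n} (cycle_adj n) = (2 * n + 2) div 3"
proof (rule gamma_211_eqI)
  show "is_211_dom {0..<n} (cycle_adj n) (cycle_211_fun n)"
    using assms by (rule is_211_dom_cycle_211_fun)
  show "(\<Sum>v\<in>{0..<n}. cycle_211_fun n v) = (2 * n + 2) div 3"
    by (rule sum_cycle_211_fun)
  show "(2 * n + 2) div 3 \<le> (\<Sum>v\<in>{0..<n}. g v)"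
    if "is_211_dom {0..<n} (cycle_adj n) g" for g
    using cycle_211_dom_weight_ge[OF that assms] by linarith
qed

lemma nat_ceiling_divide_3: "nat \<lceil>real a / 3\<rceil> = (a + 2) div 3"
proof -
  have "\<lceil>real a / 3\<rceil> = - (- int a div 3)"
    using ceiling_divide_eq_div[of "int a" 3] by simp
  also have "\<dots> = int ((a + 2) div 3)"
    by presburger
  finally show ?thesis
    by simp
qed

theorem proposition12:
  fixes n :: nat
  assumes "n \<ge> 4"
  shows "gamma_211_graph (P n) =
           (if n mod 3 = 0 then 2 * n div 3 + 1 else 2 * nat \<lceil>real n / 3\<rceil>)
         \<and> gamma_211_graph (C n) = nat \<lceil>2 * real n / 3\<rceil>"
proof
  have "(2 * n + 4) div 3 = (if n mod 3 = 0 then 2 * n div 3 + 1 else 2 * ((n + 2) div 3))"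
    by (cases "n mod 3 = 0") presburger+
  then show "gamma_211_graph (P n) =
               (if n mod 3 = 0 then 2 * n div 3 + 1 else 2 * nat \<lceil>real n / 3\<rceil>)"
    using gamma_211_path[OF assms] by (simp add: gamma_211_graph_def P_def nat_ceiling_divide_3)
  have "nat \<lceil>2 * real n / 3\<rceil> = (2 * n + 2) div 3"
    using nat_ceiling_divide_3[of "2 * n"] by simp
  then show "gamma_211_graph (C n) = nat \<lceil>2 * real n / 3\<rceil>"
    using gamma_211_cycle assms by (simp add: gamma_211_graph_def C_def)
qed

end
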